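(* Let $K_M(d,p)=\sup|Q_d|_p/\prod_{m=1}^d\mu_m(dp)$, the supremum over all $n\ge1$, all $b\in B(d,n)$ and all families of martingale differences $\{\xi(i,m)\}$ with $0<\mu_m(dp)<\infty$ for all $m$. There is an absolute constant $C\in(0,\infty)$ such that for all $d\ge2$ and $p\ge2$ $$C^d\,p^{d/2}\le K_M(d,p)\le\gamma(d)\,p^d,$$ where $\gamma(1)=\sqrt2$, $\gamma(d+1)=\sqrt2(1+1/d)^d\gamma(d)$.
   Context: Martingale setting: filtration $\mathcal F(0)\subset\mathcal F(1)\subset\cdots$ with $\mathcal F(0)$ trivial; for $m=1,\dots,d$, $\xi(i,m)$ is $\mathcal F(i)$-measurable, integrable, $\mathbf E[\xi(i,m)\mid\mathcal F(i-1)]=0$. $I(d,n)=\{(i_1,\dots,i_d):1\le i_1<\dots<i_d\le n\}$, $\xi(I)=\prod_m\xi(i_m,m)$, $Q_d=\sum_{I\in I(d,n)}b(I)\xi(I)$, $B(d,n)=\{b:\sum_Ib(I)^2=1\}$. $|\eta|_p=(\mathbf E|\eta|^p)^{1/p}$, $\mu_m(p)=\sup_i|\xi(i,m)|_p$. *)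

theory Defs
  imports "HOL-Probability.Probability"
begin

definition lp_norm :: "'a measure \<Rightarrow> real \<Rightarrow> ('a \<Rightarrow> real) \<Rightarrow> real" where
  "lp_norm M p f = (\<integral>x. \<bar>f x\<bar> powr p \<partial>M) powr (1 / p)"

definition mu :: "'a measure \<Rightarrow> (nat \<Rightarrow> nat \<Rightarrow> 'a \<Rightarrow> real) \<Rightarrow> nat \<Rightarrow> nat \<Rightarrow> real \<Rightarrow> real" where
  "mu M \<xi> n m p = (SUP i\<in>{1..n}. lp_norm M p (\<xi> i m))"

definition idx_set :: "nat \<Rightarrow> nat \<Rightarrow> nat list set" where
  "idx_set d n = {I. length I = d \<and> sorted_wrt (<) I \<and> set I \<subseteq> {1..n}}"

definition xi_prod :: "(nat \<Rightarrow> nat \<Rightarrow> 'a \<Rightarrow> real) \<Rightarrow> nat \<Rightarrow> nat list \<Rightarrow> 'a \<Rightarrow> real" where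
  "xi_prod \<xi> d I x = (\<Prod>m\<in>{1..d}. \<xi> (I ! (m - 1)) m x)"

definition Qd :: "(nat \<Rightarrow> nat \<Rightarrow> 'a \<Rightarrow> real) \<Rightarrow> nat \<Rightarrow> nat \<Rightarrow> (nat list \<Rightarrow> real) \<Rightarrow> 'a \<Rightarrow> real" where
  "Qd \<xi> d n b x = (\<Sum>I\<in>idx_set d n. b I * xi_prod \<xi> d I x)"

definition coef_set :: "nat \<Rightarrow> nat \<Rightarrow> (nat list \<Rightarrow> real) set" where
  "coef_set d n = {b. (\<Sum>I\<in>idx_set d n. (b I)\<^sup>2) = 1}"

definition mart_diff :: "'a measure \<Rightarrow> (nat \<Rightarrow> 'a measure) \<Rightarrow> (nat \<Rightarrow> nat \<Rightarrow> 'a \<Rightarrow> real)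
    \<Rightarrow> nat \<Rightarrow> nat \<Rightarrow> bool" where
  "mart_diff M F \<xi> d n \<longleftrightarrow>
     prob_space M \<and>
     (\<forall>i. subalgebra M (F i)) \<and>
     (\<forall>i j. i \<le> j \<longrightarrow> sets (F i) \<subseteq> sets (F j)) \<and>
     sets (F 0) = {{}, space M} \<and>
     (\<forall>i\<in>{1..n}. \<forall>m\<in>{1..d}.
        \<xi> i m \<in> borel_measurable (F i) \<and> integrable M (\<xi> i m) \<and>
        (AE x in M. real_cond_exp M (F (i - 1)) (\<xi> i m) x = 0))"

text \<open>Admissible data for K_M(d,p): mu_m(dp) finite (|xi(i,m)|^(dp) integrable) and positive.\<close>
definition admissible :: "'a measure \<Rightarrow> (nat \<Rightarrow> 'a measure) \<Rightarrow> (nat \<Rightarrow> nat \<Rightarrow> 'a \<Rightarrow> real)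
    \<Rightarrow> nat \<Rightarrow> nat \<Rightarrow> (nat list \<Rightarrow> real) \<Rightarrow> real \<Rightarrow> bool" where
  "admissible M F \<xi> d n b p \<longleftrightarrow>
     n \<ge> 1 \<and> b \<in> coef_set d n \<and> mart_diff M F \<xi> d n \<and>
     (\<forall>i\<in>{1..n}. \<forall>m\<in>{1..d}. integrable M (\<lambda>x. \<bar>\<xi> i m x\<bar> powr (real d * p))) \<and>
     (\<forall>m\<in>{1..d}. mu M \<xi> n m (real d * p) > 0)"

text \<open>K_M(d,p) computed over probability spaces on a given carrier type 'a.\<close>
definition KM :: "'a itself \<Rightarrow> nat \<Rightarrow> real \<Rightarrow> ereal" where
  "KM _ d p = (SUP (M, F, \<xi>, n, b) \<in> {(M :: 'a measure, F, \<xi>, n, b). admissible M F \<xi> d n b p}.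
      ereal (lp_norm M p (Qd \<xi> d n b) / (\<Prod>m\<in>{1..d}. mu M \<xi> n m (real d * p))))"

fun gamma_c :: "nat \<Rightarrow> real" where
  "gamma_c 0 = 0"
| "gamma_c (Suc 0) = sqrt 2"
| "gamma_c (Suc (Suc d)) = sqrt 2 * (1 + 1 / real (Suc d)) ^ (Suc d) * gamma_c (Suc d)"

end

(* If X is F-measurable and E[D | F] = 0, integrating a second-order Taylor bound
   for |x|^q (q >= 2) and applying Hoelder gives ||X + D||_q^2 <= ||X||_q^2 + 2q(q-1) ||D||_q^2,
   so along a filtration ||sum_i D_i||_q <= sqrt 2 q (sum_i ||D_i||_q^2)^(1/2).  Splitting off
   the last index writes Q_(d+1) as the martingale transform sum_i xi(i, d+1) Y_i whose
   multipliers Y_i are chaoses of order d in the earlier variables.  Hoelder with exponents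
   d + 1 and (d + 1)/d turns the moments of order (d+1)p of xi into exactly the moments of
   order d p' with p' = (1 + 1/d) p needed for the Y_i, and induction on d produces the factor
   sqrt 2 (1 + 1/d)^d p per level, i.e. gamma(d) p^d.

   For independent Rademacher signs, n = d floor(p) and equal coefficients
   b = (n choose d)^(-1/2), the chaos takes the value (n choose d)^(1/2) >= floor(p)^(d/2) at
   the all-ones sign vector, which has probability 2^(-n) >= 2^(-d p); hence
   |Q_d|_p >= floor(p)^(d/2) 2^(-d) >= (p/2)^(d/2) 2^(-d) >= 4^(-d) p^(d/2). *)

theory Submission
  imports Defs
begin

section \<open>Elementary inequalities for powers\<close>

lemma powr_diff_one_mult:
  fixes v r :: real assumes "0 \<le> v" "1 \<le> r"
  shows "v powr (r - 1) * v = v powr r"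
  using assms by (cases "v = 0") (auto simp: powr_diff)

lemma powr_le_powr_diff_one_mult:
  fixes u m r :: real assumes "0 \<le> u" "u \<le> m" "1 \<le> r"
  shows "u powr r \<le> m powr (r - 1) * u"
  using assms powr_diff_one_mult[of u r] by (metis mult_right_mono powr_mono2 diff_ge_0_iff_ge)

lemma powr_tangent_le:
  fixes u v r :: real assumes u: "0 \<le> u" and v: "0 \<le> v" and r: "1 \<le> r"
  shows "v powr r + r * v powr (r - 1) * (u - v) \<le> u powr r"
proof (cases "r = 1 \<or> u = 0 \<or> v = 0")
  case True
  have "(1 - r) * v powr r \<le> 0" using r by (simp add: mult_nonpos_nonneg)
  with True show ?thesis using u v powr_diff_one_mult[OF v r] by (auto simp: algebra_simps)
next
  case False
  then have r1: "r > 1" and u0: "u > 0" and v0: "v > 0" using u v r by auto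
  have "u * v powr (r - 1) \<le> u powr r / r + (v powr (r - 1)) powr (r / (r - 1)) / (r / (r - 1))"
    using r1 u0 v0 by (intro Youngs_inequality) (auto simp: field_simps)
  also have "(v powr (r - 1)) powr (r / (r - 1)) = v powr r"
    using r1 by (simp add: powr_powr)
  finally have "r * (u * v powr (r - 1)) \<le> u powr r + v powr r * (r - 1)"
    using r1 by (simp add: field_simps)
  then show ?thesis using powr_diff_one_mult[OF v r] by (simp add: algebra_simps)
qed

lemma abs_powr_tangent_le:
  fixes y z q :: real assumes q: "1 \<le> q"
  shows "\<bar>z\<bar> powr q + q * sgn z * \<bar>z\<bar> powr (q - 1) * (y - z) \<le> \<bar>y\<bar> powr q"
proof -
  have "sgn z * (y - z) \<le> \<bar>y\<bar> - \<bar>z\<bar>"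
    by (cases "z > 0"; cases "z < 0") (auto simp: sgn_if)
  then have "q * \<bar>z\<bar> powr (q - 1) * (sgn z * (y - z)) \<le> q * \<bar>z\<bar> powr (q - 1) * (\<bar>y\<bar> - \<bar>z\<bar>)"
    using q by (intro mult_left_mono) auto
  with powr_tangent_le[of "\<bar>y\<bar>" "\<bar>z\<bar>" q] q show ?thesis by (simp add: algebra_simps)
qed

lemma powr_diff_le_mult_diff:
  fixes u v m r :: real assumes "0 \<le> u" "u \<le> v" "v \<le> m" "1 \<le> r"
  shows "v powr r - u powr r \<le> r * m powr (r - 1) * (v - u)"
proof -
  have "v powr r - u powr r \<le> r * v powr (r - 1) * (v - u)"
    using powr_tangent_le[of u v r] assms by (simp add: algebra_simps)
  also have "\<dots> \<le> r * m powr (r - 1) * (v - u)"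
    using assms by (intro mult_right_mono mult_left_mono powr_mono2) auto
  finally show ?thesis .
qed

lemma signed_powr_lipschitz:
  fixes a b r :: real assumes r: "1 \<le> r"
  shows "\<bar>sgn a * \<bar>a\<bar> powr r - sgn b * \<bar>b\<bar> powr r\<bar> \<le> r * max \<bar>a\<bar> \<bar>b\<bar> powr (r - 1) * \<bar>a - b\<bar>"
proof (cases "0 \<le> a * b")
  case True
  then have eq: "\<bar>sgn a * \<bar>a\<bar> powr r - sgn b * \<bar>b\<bar> powr r\<bar> = \<bar>\<bar>a\<bar> powr r - \<bar>b\<bar> powr r\<bar>"
      "\<bar>a - b\<bar> = \<bar>\<bar>a\<bar> - \<bar>b\<bar>\<bar>"
    by (auto simp: sgn_if zero_le_mult_iff abs_minus_commute)
  show ?thesis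
  proof (cases "\<bar>a\<bar> \<le> \<bar>b\<bar>")
    case True
    then show ?thesis unfolding eq
      using powr_diff_le_mult_diff[of "\<bar>a\<bar>" "\<bar>b\<bar>" "max \<bar>a\<bar> \<bar>b\<bar>" r] r powr_mono2[of r "\<bar>a\<bar>" "\<bar>b\<bar>"]
      by simp
  next
    case False
    then show ?thesis unfolding eq
      using powr_diff_le_mult_diff[of "\<bar>b\<bar>" "\<bar>a\<bar>" "max \<bar>a\<bar> \<bar>b\<bar>" r] r powr_mono2[of r "\<bar>b\<bar>" "\<bar>a\<bar>"]
      by simp
  qed
next
  case False
  define m where "m = max \<bar>a\<bar> \<bar>b\<bar> powr (r - 1)"
  from False have sb: "sgn b = - sgn a" and sa: "\<bar>sgn a\<bar> = 1" and ab: "\<bar>a - b\<bar> = \<bar>a\<bar> + \<bar>b\<bar>"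
    by (auto simp: sgn_if zero_le_mult_iff)
  have "sgn a * \<bar>a\<bar> powr r - sgn b * \<bar>b\<bar> powr r = sgn a * (\<bar>a\<bar> powr r + \<bar>b\<bar> powr r)"
    unfolding sb by (simp add: algebra_simps)
  then have "\<bar>sgn a * \<bar>a\<bar> powr r - sgn b * \<bar>b\<bar> powr r\<bar> = \<bar>a\<bar> powr r + \<bar>b\<bar> powr r"
    by (simp only: abs_mult sa) simp
  also have "\<dots> \<le> m * \<bar>a\<bar> + m * \<bar>b\<bar>"
    unfolding m_def using r by (intro add_mono powr_le_powr_diff_one_mult) auto
  also have "\<dots> = m * \<bar>a - b\<bar>"
    unfolding ab by (simp add: algebra_simps)
  also have "\<dots> \<le> r * m * \<bar>a - b\<bar>"
    using mult_right_mono[OF r, of "m * \<bar>a - b\<bar>"] by (simp add: m_def mult.assoc)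
  finally show ?thesis unfolding m_def .
qed

text \<open>The tangent at \<open>x + h\<close> leaves the remainder \<open>q (s (x + h) - s x) h\<close> with
  \<open>s y = sgn y \<bar>y\<bar> powr (q - 1)\<close>, and for \<open>q \<ge> 2\<close> the function \<open>s\<close> is Lipschitz between \<open>x\<close> and
  \<open>x + h\<close> with constant \<open>(q - 1) max \<bar>x\<bar> \<bar>x + h\<bar> powr (q - 2)\<close>.\<close>
lemma abs_add_powr_le_second_order:
  fixes x h q :: real assumes q: "2 \<le> q"
  shows "\<bar>x + h\<bar> powr q \<le> \<bar>x\<bar> powr q + q * sgn x * \<bar>x\<bar> powr (q - 1) * h
           + q * (q - 1) * ((\<bar>x\<bar> powr (q - 2) + \<bar>x + h\<bar> powr (q - 2)) * h\<^sup>2)"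
proof -
  define s where "s = (\<lambda>y::real. sgn y * \<bar>y\<bar> powr (q - 1))"
  have "\<bar>x + h\<bar> powr q \<le> \<bar>x\<bar> powr q + q * s x * h + q * ((s (x + h) - s x) * h)"
    using abs_powr_tangent_le[of q "x + h" x] q unfolding s_def by (simp add: algebra_simps)
  moreover have "(s (x + h) - s x) * h \<le> (q - 1) * ((\<bar>x\<bar> powr (q - 2) + \<bar>x + h\<bar> powr (q - 2)) * h\<^sup>2)"
  proof -
    have "(s (x + h) - s x) * h \<le> \<bar>s (x + h) - s x\<bar> * \<bar>h\<bar>"
      by (metis abs_ge_self abs_mult)
    also have "\<dots> \<le> (q - 1) * max \<bar>x + h\<bar> \<bar>x\<bar> powr (q - 2) * \<bar>h\<bar> * \<bar>h\<bar>"
      unfolding s_def using signed_powr_lipschitz[of "q - 1" "x + h" x] q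
      by (intro mult_right_mono) (auto simp: diff_diff_eq)
    also have "max \<bar>x + h\<bar> \<bar>x\<bar> powr (q - 2) \<le> \<bar>x\<bar> powr (q - 2) + \<bar>x + h\<bar> powr (q - 2)"
      by (simp add: max_def)
    then have "(q - 1) * max \<bar>x + h\<bar> \<bar>x\<bar> powr (q - 2) * \<bar>h\<bar> * \<bar>h\<bar>
        \<le> (q - 1) * ((\<bar>x\<bar> powr (q - 2) + \<bar>x + h\<bar> powr (q - 2)) * h\<^sup>2)"
      using q by (simp add: power2_eq_square mult_right_mono mult.assoc)
    finally show ?thesis .
  qed
  then have "q * ((s (x + h) - s x) * h) \<le> q * ((q - 1) * ((\<bar>x\<bar> powr (q - 2) + \<bar>x + h\<bar> powr (q - 2)) * h\<^sup>2))"
    using q by (intro mult_left_mono) auto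
  ultimately show ?thesis unfolding s_def by (simp add: mult.assoc)
qed

lemma le_add_of_powr_le:
  fixes u v w s k :: real
  assumes u: "0 \<le> u" and v: "0 \<le> v" and w: "0 \<le> w" and s: "1 \<le> s" and k: "0 \<le> k"
    and le: "u powr s \<le> v powr s + k * (v powr (s - 1) + u powr (s - 1)) * w"
  shows "u \<le> v + 2 * k * w"
proof (rule ccontr)
  assume "\<not> ?thesis"
  then have gt: "u > v + 2 * k * w" by simp
  have kw: "0 \<le> k * w" using k w by simp
  then have u0: "u > 0" and vu: "v \<le> u" using gt v by linarith+
  have "u powr (s - 1) * (u - k * w) \<le> v powr (s - 1) * (v + k * w)"
    using le powr_diff_one_mult[OF u s] powr_diff_one_mult[OF v s] by (simp add: algebra_simps)
  also have "\<dots> \<le> u powr (s - 1) * (v + k * w)"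
    using vu v s kw by (intro mult_right_mono powr_mono2) auto
  finally have "u - k * w \<le> v + k * w" using u0 by simp
  then show False using gt by simp
qed

lemma abs_add_powr_le:
  fixes x h q :: real assumes q: "0 \<le> q"
  shows "\<bar>x + h\<bar> powr q \<le> 2 powr q * (\<bar>x\<bar> powr q + \<bar>h\<bar> powr q)"
proof -
  have "\<bar>x + h\<bar> powr q \<le> (2 * max \<bar>x\<bar> \<bar>h\<bar>) powr q" using q by (intro powr_mono2) auto
  also have "\<dots> = 2 powr q * max \<bar>x\<bar> \<bar>h\<bar> powr q" by (simp add: powr_mult)
  also have "max \<bar>x\<bar> \<bar>h\<bar> powr q \<le> \<bar>x\<bar> powr q + \<bar>h\<bar> powr q" by (simp add: max_def)
  finally show ?thesis by simp
qed

section \<open>\<open>L\<^sup>p\<close> norms and Hoelder's inequality\<close>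

lemma lp_norm_nonneg [simp]: "0 \<le> lp_norm M q f"
  unfolding lp_norm_def by simp

lemma power2_lp_norm: "(lp_norm M q f)\<^sup>2 = (\<integral>x. \<bar>f x\<bar> powr q \<partial>M) powr (2 / q)"
  unfolding lp_norm_def power2_eq_square by (simp add: powr_add[symmetric])

lemma lp_norm_mult_const:
  assumes q: "q > 0"
  shows "lp_norm M q (\<lambda>x. f x * a) = \<bar>a\<bar> * lp_norm M q f"
proof -
  have "lp_norm M q (\<lambda>x. f x * a) = ((\<integral>x. \<bar>f x\<bar> powr q \<partial>M) * \<bar>a\<bar> powr q) powr (1 / q)"
    unfolding lp_norm_def by (simp add: abs_mult powr_mult)
  also have "\<dots> = \<bar>a\<bar> * lp_norm M q f"
    using q unfolding lp_norm_def by (simp add: powr_mult integral_nonneg_AE powr_powr)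
  finally show ?thesis .
qed

lemma Holder_inequality:
  fixes f g :: "'a \<Rightarrow> real" and s t :: real
  assumes st: "s > 1" "t > 1" "1 / s + 1 / t = 1"
    and [measurable]: "f \<in> borel_measurable M" "g \<in> borel_measurable M"
    and nonneg: "\<And>x. 0 \<le> f x" "\<And>x. 0 \<le> g x"
    and f: "integrable M (\<lambda>x. f x powr s)" and g: "integrable M (\<lambda>x. g x powr t)"
  shows "integrable M (\<lambda>x. f x * g x)"
    and "(\<integral>x. f x * g x \<partial>M) \<le> (\<integral>x. f x powr s \<partial>M) powr (1 / s) * (\<integral>x. g x powr t \<partial>M) powr (1 / t)"
proof -
  show fg: "integrable M (\<lambda>x. f x * g x)"
  proof (rule Bochner_Integration.integrable_bound[of _ "\<lambda>x. f x powr s / s + g x powr t / t"])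
    show "AE x in M. norm (f x * g x) \<le> norm (f x powr s / s + g x powr t / t)"
      using nonneg by (intro AE_I2) (auto simp: abs_mult intro!: order_trans[OF Youngs_inequality[OF st] abs_ge_self])
  qed (use f g in auto)
  define a where "a = (\<integral>x. f x powr s \<partial>M)"
  define e where "e = (\<integral>x. g x powr t \<partial>M)"
  show "(\<integral>x. f x * g x \<partial>M) \<le> a powr (1 / s) * e powr (1 / t)"
  proof (cases "a = 0 \<or> e = 0")
    case True
    then have "AE x in M. f x powr s = 0 \<or> g x powr t = 0"
      using integral_nonneg_eq_0_iff_AE[OF f] integral_nonneg_eq_0_iff_AE[OF g]
      unfolding a_def e_def by auto
    then have "AE x in M. f x * g x = 0" by eventually_elim auto
    then show ?thesis by (simp add: integral_eq_zero_AE)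
  next
    case False
    moreover have "0 \<le> a" "0 \<le> e" unfolding a_def e_def by (simp_all add: integral_nonneg_AE)
    ultimately have a: "a > 0" and e: "e > 0" by auto
    define A where "A = a powr (1 / s)"
    define E where "E = e powr (1 / t)"
    have A: "A > 0" "A powr s = a" and E: "E > 0" "E powr t = e"
      unfolding A_def E_def using a e st by (auto simp: powr_powr)
    have "f x * g x \<le> A * E * (f x powr s / (a * s) + g x powr t / (e * t))" for x
    proof -
      have "(f x / A) * (g x / E) \<le> (f x / A) powr s / s + (g x / E) powr t / t"
        using Youngs_inequality[OF st, of "f x / A" "g x / E"] nonneg A E by simp
      then show ?thesis using A E nonneg by (simp add: powr_divide field_simps)
    qed
    then have "(\<integral>x. f x * g x \<partial>M) \<le> (\<integral>x. A * E * (f x powr s / (a * s) + g x powr t / (e * t)) \<partial>M)"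
      using f g fg by (intro integral_mono) auto
    also have "\<dots> = A * E"
      using f g a e st by (simp add: a_def [symmetric] e_def [symmetric])
    finally show ?thesis unfolding A_def E_def .
  qed
qed

lemma lp_norm_mult_le:
  fixes f g :: "'a \<Rightarrow> real" and s t q :: real
  assumes st: "s > 1" "t > 1" "1 / s + 1 / t = 1" and q: "q > 0"
    and [measurable]: "f \<in> borel_measurable M" "g \<in> borel_measurable M"
    and f: "integrable M (\<lambda>x. \<bar>f x\<bar> powr (s * q))" and g: "integrable M (\<lambda>x. \<bar>g x\<bar> powr (t * q))"
  shows "integrable M (\<lambda>x. \<bar>f x * g x\<bar> powr q)"
    and "lp_norm M q (\<lambda>x. f x * g x) \<le> lp_norm M (s * q) f * lp_norm M (t * q) g"
proof -
  have powr_q: "(\<lambda>x. (\<bar>h x\<bar> powr q) powr r) = (\<lambda>x. \<bar>h x\<bar> powr (r * q))" for h :: "'a \<Rightarrow> real" and r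
    by (simp add: powr_powr mult.commute)
  have prod: "(\<lambda>x. \<bar>f x * g x\<bar> powr q) = (\<lambda>x. \<bar>f x\<bar> powr q * \<bar>g x\<bar> powr q)"
    by (simp add: abs_mult powr_mult)
  note H = Holder_inequality[OF st, of "\<lambda>x. \<bar>f x\<bar> powr q" M "\<lambda>x. \<bar>g x\<bar> powr q", unfolded powr_q]
  show "integrable M (\<lambda>x. \<bar>f x * g x\<bar> powr q)" unfolding prod using H f g by simp
  have "lp_norm M q (\<lambda>x. f x * g x) = (\<integral>x. \<bar>f x\<bar> powr q * \<bar>g x\<bar> powr q \<partial>M) powr (1 / q)"
    unfolding lp_norm_def prod ..
  also have "\<dots> \<le> ((\<integral>x. \<bar>f x\<bar> powr (s * q) \<partial>M) powr (1 / s) * (\<integral>x. \<bar>g x\<bar> powr (t * q) \<partial>M) powr (1 / t)) powr (1 / q)"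
    using H f g q by (intro powr_mono2) (auto simp: integral_nonneg_AE)
  also have "\<dots> = lp_norm M (s * q) f * lp_norm M (t * q) g"
    unfolding lp_norm_def by (simp add: powr_mult powr_powr integral_nonneg_AE)
  finally show "lp_norm M q (\<lambda>x. f x * g x) \<le> lp_norm M (s * q) f * lp_norm M (t * q) g" .
qed

lemma lp_norm_mult_le_Holder_Suc:
  fixes f g :: "'a \<Rightarrow> real" and d :: nat
  assumes d: "0 < d" and q: "0 < q"
    and f: "f \<in> borel_measurable M" "integrable M (\<lambda>x. \<bar>f x\<bar> powr (real (Suc d) * q))"
      "lp_norm M (real (Suc d) * q) f \<le> A"
    and g: "g \<in> borel_measurable M" "integrable M (\<lambda>x. \<bar>g x\<bar> powr ((1 + 1 / real d) * q))"
      "lp_norm M ((1 + 1 / real d) * q) g \<le> B"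
  shows "integrable M (\<lambda>x. \<bar>f x * g x\<bar> powr q) \<and> lp_norm M q (\<lambda>x. f x * g x) \<le> A * B"
proof -
  have "1 < real (Suc d)" "1 < 1 + 1 / real d" "1 / real (Suc d) + 1 / (1 + 1 / real d) = 1"
    using d by (auto simp: field_simps)
  note Holder = lp_norm_mult_le[OF this q f(1) g(1) f(2) g(2)]
  have "lp_norm M q (\<lambda>x. f x * g x) \<le> A * B"
    using Holder(2) f(3) g(3) by (elim order_trans) (auto intro!: mult_mono order_trans[OF _ f(3)])
  with Holder(1) show ?thesis by blast
qed

lemma integrable_abs_powr_diff_one_mult_abs:
  fixes X D :: "'a \<Rightarrow> real"
  assumes q: "1 < q" and [measurable]: "X \<in> borel_measurable M" "D \<in> borel_measurable M"
    and X: "integrable M (\<lambda>x. \<bar>X x\<bar> powr q)" and D: "integrable M (\<lambda>x. \<bar>D x\<bar> powr q)"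
  shows "integrable M (\<lambda>x. \<bar>X x\<bar> powr (q - 1) * \<bar>D x\<bar>)"
proof -
  have "(\<lambda>x. (\<bar>X x\<bar> powr (q - 1)) powr (q / (q - 1))) = (\<lambda>x. \<bar>X x\<bar> powr q)"
    using q by (simp add: powr_powr)
  then show ?thesis
    using Holder_inequality(1)[of "q / (q - 1)" q "\<lambda>x. \<bar>X x\<bar> powr (q - 1)" M "\<lambda>x. \<bar>D x\<bar>"] q X D
    by (auto simp: field_simps)
qed

lemma integral_abs_powr_mult_square_le:
  fixes Y D :: "'a \<Rightarrow> real" and q :: real
  assumes q: "2 \<le> q" and [measurable]: "Y \<in> borel_measurable M" "D \<in> borel_measurable M"
    and Y: "integrable M (\<lambda>x. \<bar>Y x\<bar> powr q)" and D: "integrable M (\<lambda>x. \<bar>D x\<bar> powr q)"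
  shows "integrable M (\<lambda>x. \<bar>Y x\<bar> powr (q - 2) * (D x)\<^sup>2)"
    and "(\<integral>x. \<bar>Y x\<bar> powr (q - 2) * (D x)\<^sup>2 \<partial>M) \<le> lp_norm M q Y powr (q - 2) * (lp_norm M q D)\<^sup>2"
proof -
  have square: "(D x)\<^sup>2 = \<bar>D x\<bar> powr 2" for x by simp
  consider "q = 2" | "q > 2" using q by linarith
  then have "integrable M (\<lambda>x. \<bar>Y x\<bar> powr (q - 2) * (D x)\<^sup>2) \<and>
    (\<integral>x. \<bar>Y x\<bar> powr (q - 2) * (D x)\<^sup>2 \<partial>M)
       \<le> (\<integral>x. \<bar>Y x\<bar> powr q \<partial>M) powr ((q - 2) / q) * (\<integral>x. \<bar>D x\<bar> powr q \<partial>M) powr (2 / q)"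
  proof cases
    case 1
    \<comment> \<open>\<open>0 powr 0 = 0\<close>, so the factor \<open>\<bar>Y x\<bar> powr 0\<close> is the indicator of \<open>Y x \<noteq> 0\<close>\<close>
    have D2: "integrable M (\<lambda>x. (D x)\<^sup>2)" using D 1 by simp
    have int: "integrable M (\<lambda>x. \<bar>Y x\<bar> powr (q - 2) * (D x)\<^sup>2)"
      by (rule Bochner_Integration.integrable_bound[OF D2]) (auto simp: 1)
    show ?thesis
    proof (cases "(\<integral>x. \<bar>Y x\<bar> powr q \<partial>M) = 0")
      case True
      then have "AE x in M. \<bar>Y x\<bar> powr q = 0" using integral_nonneg_eq_0_iff_AE[OF Y] by simp
      then have "AE x in M. \<bar>Y x\<bar> powr (q - 2) * (D x)\<^sup>2 = 0" by eventually_elim simp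
      then show ?thesis using int by (simp add: integral_eq_zero_AE)
    next
      case False
      have "(\<integral>x. \<bar>Y x\<bar> powr (q - 2) * (D x)\<^sup>2 \<partial>M) \<le> (\<integral>x. (D x)\<^sup>2 \<partial>M)"
        using int D2 1 by (intro integral_mono) auto
      then show ?thesis using int 1 False by (simp add: integral_nonneg_AE)
    qed
  next
    case 2
    have powr_Y: "(\<lambda>x. (\<bar>Y x\<bar> powr (q - 2)) powr (q / (q - 2))) = (\<lambda>x. \<bar>Y x\<bar> powr q)"
      using 2 by (simp add: powr_powr)
    have powr_D: "(\<lambda>x. (\<bar>D x\<bar> powr 2) powr (q / 2)) = (\<lambda>x. \<bar>D x\<bar> powr q)"
      by (simp only: powr_powr) simp
    show ?thesis
      using Holder_inequality[of "q / (q - 2)" "q / 2" "\<lambda>x. \<bar>Y x\<bar> powr (q - 2)" M "\<lambda>x. \<bar>D x\<bar> powr 2"]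
        2 Y D unfolding powr_Y powr_D square by (auto simp: field_simps)
  qed
  then show "integrable M (\<lambda>x. \<bar>Y x\<bar> powr (q - 2) * (D x)\<^sup>2)"
    and "(\<integral>x. \<bar>Y x\<bar> powr (q - 2) * (D x)\<^sup>2 \<partial>M) \<le> lp_norm M q Y powr (q - 2) * (lp_norm M q D)\<^sup>2"
    using q unfolding power2_lp_norm by (auto simp: lp_norm_def powr_powr)
qed

lemma (in finite_measure) integrable_of_integrable_abs_powr:
  fixes f :: "'a \<Rightarrow> real"
  assumes q: "1 \<le> q" and [measurable]: "f \<in> borel_measurable M"
    and f: "integrable M (\<lambda>x. \<bar>f x\<bar> powr q)"
  shows "integrable M f"
proof (rule Bochner_Integration.integrable_bound[of _ "\<lambda>x. 1 + \<bar>f x\<bar> powr q"])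
  have "\<bar>f x\<bar> \<le> 1 + \<bar>f x\<bar> powr q" for x
  proof (cases "\<bar>f x\<bar> \<le> 1")
    case False
    then have "\<bar>f x\<bar> powr 1 \<le> \<bar>f x\<bar> powr q" using q by (intro powr_mono) auto
    then show ?thesis using False by simp
  qed (smt (verit) powr_ge_zero)
  then show "AE x in M. norm (f x) \<le> norm (1 + \<bar>f x\<bar> powr q)"
    by (intro AE_I2) (simp add: abs_of_nonneg add_nonneg_nonneg)
qed (use f in auto)

lemma lp_norm_powr:
  assumes "q > 0"
  shows "lp_norm M q f powr q = (\<integral>x. \<bar>f x\<bar> powr q \<partial>M)"
  unfolding lp_norm_def using assms by (simp add: powr_powr integral_nonneg_AE)

lemma power2_powr_eq:
  fixes N r :: real assumes "0 \<le> N"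
  shows "(N\<^sup>2) powr r = N powr (2 * r)"
  using assms by (simp add: powr_powr flip: powr_numeral)

section \<open>A martingale inequality in \<open>L\<^sup>q\<close>\<close>

lemma (in sigma_finite_subalgebra) integral_mult_eq_zero_if_cond_exp_zero:
  fixes f D :: "'a \<Rightarrow> real"
  assumes [measurable]: "f \<in> borel_measurable F" "D \<in> borel_measurable M"
    and int: "integrable M (\<lambda>x. f x * D x)" and centered: "AE x in M. real_cond_exp M F D x = 0"
  shows "(\<integral>x. f x * D x \<partial>M) = 0"
proof -
  have "(\<integral>x. f x * D x \<partial>M) = (\<integral>x. f x * real_cond_exp M F D x \<partial>M)"
    using real_cond_exp_intg(2)[OF int] by simp
  also have "\<dots> = 0"
    using centered by (intro integral_eq_zero_AE) (auto elim: AE_mp)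
  finally show ?thesis .
qed

lemma (in sigma_finite_subalgebra) real_cond_exp_mult_eq_zero:
  fixes Y Z :: "'a \<Rightarrow> real"
  assumes [measurable]: "Y \<in> borel_measurable F" "Z \<in> borel_measurable M"
    and int: "integrable M (\<lambda>x. Z x * Y x)" and centered: "AE x in M. real_cond_exp M F Z x = 0"
  shows "AE x in M. real_cond_exp M F (\<lambda>x. Z x * Y x) x = 0"
proof -
  have "AE x in M. real_cond_exp M F (\<lambda>x. Y x * Z x) x = Y x * real_cond_exp M F Z x"
    using int by (intro real_cond_exp_mult) (simp_all add: mult.commute)
  then show ?thesis using centered by eventually_elim (simp add: mult.commute)
qed

lemma (in sigma_finite_subalgebra) lp_norm_add_centered_powr_le:
  fixes X D :: "'a \<Rightarrow> real"
  assumes q: "2 \<le> q" and X[measurable]: "X \<in> borel_measurable F" and [measurable]: "D \<in> borel_measurable M"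
    and centered: "AE x in M. real_cond_exp M F D x = 0"
    and iX: "integrable M (\<lambda>x. \<bar>X x\<bar> powr q)" and iD: "integrable M (\<lambda>x. \<bar>D x\<bar> powr q)"
  shows "integrable M (\<lambda>x. \<bar>X x + D x\<bar> powr q)"
    and "lp_norm M q (\<lambda>x. X x + D x) powr q \<le> lp_norm M q X powr q
      + q * (q - 1) * (lp_norm M q X powr (q - 2) + lp_norm M q (\<lambda>x. X x + D x) powr (q - 2))
        * (lp_norm M q D)\<^sup>2"
proof -
  have [measurable]: "X \<in> borel_measurable M" using measurable_from_subalg[OF subalg X] .
  show iS: "integrable M (\<lambda>x. \<bar>X x + D x\<bar> powr q)"
  proof (rule Bochner_Integration.integrable_bound[of _ "\<lambda>x. 2 powr q * (\<bar>X x\<bar> powr q + \<bar>D x\<bar> powr q)"])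
    show "AE x in M. norm (\<bar>X x + D x\<bar> powr q) \<le> norm (2 powr q * (\<bar>X x\<bar> powr q + \<bar>D x\<bar> powr q))"
      using abs_add_powr_le q by (intro AE_I2) auto
  qed (use iX iD in auto)
  define f where "f = (\<lambda>x. q * sgn (X x) * \<bar>X x\<bar> powr (q - 1))"
  have [measurable]: "f \<in> borel_measurable F" unfolding f_def by measurable
  have "integrable M (\<lambda>x. q * (\<bar>X x\<bar> powr (q - 1) * \<bar>D x\<bar>))"
    using integrable_abs_powr_diff_one_mult_abs[of q X M D] q iX iD by simp
  then have ifD: "integrable M (\<lambda>x. f x * D x)"
    by (rule Bochner_Integration.integrable_bound)
      (use q in \<open>auto simp: f_def abs_mult abs_sgn_eq measurable_from_subalg[OF subalg]\<close>)
  have "\<bar>X x + D x\<bar> powr q \<le> \<bar>X x\<bar> powr q + f x * D x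
      + q * (q - 1) * (\<bar>X x\<bar> powr (q - 2) * (D x)\<^sup>2 + \<bar>X x + D x\<bar> powr (q - 2) * (D x)\<^sup>2)" for x
    using abs_add_powr_le_second_order[OF q, of "X x" "D x"] unfolding f_def by (simp add: algebra_simps)
  then have "(\<integral>x. \<bar>X x + D x\<bar> powr q \<partial>M) \<le> (\<integral>x. \<bar>X x\<bar> powr q + f x * D x
      + q * (q - 1) * (\<bar>X x\<bar> powr (q - 2) * (D x)\<^sup>2 + \<bar>X x + D x\<bar> powr (q - 2) * (D x)\<^sup>2) \<partial>M)"
    using iS iX ifD
      integral_abs_powr_mult_square_le(1)[OF q _ _ iX iD] integral_abs_powr_mult_square_le(1)[OF q _ _ iS iD]
    by (intro integral_mono) auto
  also have "\<dots> = (\<integral>x. \<bar>X x\<bar> powr q \<partial>M) + (\<integral>x. f x * D x \<partial>M)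
      + q * (q - 1) * ((\<integral>x. \<bar>X x\<bar> powr (q - 2) * (D x)\<^sup>2 \<partial>M) + (\<integral>x. \<bar>X x + D x\<bar> powr (q - 2) * (D x)\<^sup>2 \<partial>M))"
    using iX ifD integral_abs_powr_mult_square_le(1)[OF q _ _ iX iD] integral_abs_powr_mult_square_le(1)[OF q _ _ iS iD]
    by simp
  also have "(\<integral>x. f x * D x \<partial>M) = 0"
    using integral_mult_eq_zero_if_cond_exp_zero[OF _ _ ifD centered] by simp
  also have "q * (q - 1) * ((\<integral>x. \<bar>X x\<bar> powr (q - 2) * (D x)\<^sup>2 \<partial>M) + (\<integral>x. \<bar>X x + D x\<bar> powr (q - 2) * (D x)\<^sup>2 \<partial>M))
      \<le> q * (q - 1) * (lp_norm M q X powr (q - 2) * (lp_norm M q D)\<^sup>2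
        + lp_norm M q (\<lambda>x. X x + D x) powr (q - 2) * (lp_norm M q D)\<^sup>2)"
    using q iX iD iS by (intro mult_left_mono add_mono integral_abs_powr_mult_square_le(2)) auto
  finally show "lp_norm M q (\<lambda>x. X x + D x) powr q \<le> lp_norm M q X powr q
      + q * (q - 1) * (lp_norm M q X powr (q - 2) + lp_norm M q (\<lambda>x. X x + D x) powr (q - 2))
        * (lp_norm M q D)\<^sup>2"
    using q by (simp add: lp_norm_powr algebra_simps)
qed

lemma (in sigma_finite_subalgebra) lp_norm_add_centered_le:
  fixes X D :: "'a \<Rightarrow> real"
  assumes q: "2 \<le> q" and "X \<in> borel_measurable F" "D \<in> borel_measurable M"
    and "AE x in M. real_cond_exp M F D x = 0"
    and "integrable M (\<lambda>x. \<bar>X x\<bar> powr q)" "integrable M (\<lambda>x. \<bar>D x\<bar> powr q)"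
  shows "(lp_norm M q (\<lambda>x. X x + D x))\<^sup>2 \<le> (lp_norm M q X)\<^sup>2 + 2 * q * (q - 1) * (lp_norm M q D)\<^sup>2"
proof -
  have "((lp_norm M q (\<lambda>x. X x + D x))\<^sup>2) powr (q / 2) \<le> ((lp_norm M q X)\<^sup>2) powr (q / 2)
    + q * (q - 1) * (((lp_norm M q X)\<^sup>2) powr (q / 2 - 1) + ((lp_norm M q (\<lambda>x. X x + D x))\<^sup>2) powr (q / 2 - 1))
      * (lp_norm M q D)\<^sup>2"
    using lp_norm_add_centered_powr_le(2)[OF assms] by (simp add: power2_powr_eq algebra_simps)
  then show ?thesis
    using le_add_of_powr_le[where s = "q / 2" and k = "q * (q - 1)"] q by (simp add: mult.assoc)
qed

locale filtered_prob_space = prob_space +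
  fixes F :: "nat \<Rightarrow> 'a measure"
  assumes subalgebra_F: "subalgebra M (F i)"
    and sets_F_mono: "i \<le> j \<Longrightarrow> sets (F i) \<subseteq> sets (F j)"
begin

lemma sigma_finite_subalgebra_F: "sigma_finite_subalgebra M (F i)"
  by (intro finite_measure_subalgebra_is_sigma_finite finite_measure_subalgebra.intro
      finite_measure_axioms) (simp add: finite_measure_subalgebra_axioms_def subalgebra_F)

lemma measurable_F_mono:
  assumes "f \<in> borel_measurable (F i)" "i \<le> j"
  shows "f \<in> borel_measurable (F j)"
proof -
  have "subalgebra (F j) (F i)"
    using subalgebra_F[of i] subalgebra_F[of j] sets_F_mono[OF assms(2)] by (simp add: subalgebra_def)
  then show ?thesis using measurable_from_subalg assms(1) by blast
qed

lemma measurable_F_imp_M: "f \<in> borel_measurable (F i) \<Longrightarrow> f \<in> borel_measurable M"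
  using measurable_from_subalg[OF subalgebra_F] .

lemma lp_norm_martingale_le:
  fixes D :: "nat \<Rightarrow> 'a \<Rightarrow> real"
  assumes q: "2 \<le> q"
    and adapted: "\<And>i. i \<in> {1..n} \<Longrightarrow> D i \<in> borel_measurable (F i)"
    and centered: "\<And>i. i \<in> {1..n} \<Longrightarrow> AE x in M. real_cond_exp M (F (i - 1)) (D i) x = 0"
    and Lq: "\<And>i. i \<in> {1..n} \<Longrightarrow> integrable M (\<lambda>x. \<bar>D i x\<bar> powr q)"
  shows "integrable M (\<lambda>x. \<bar>\<Sum>i=1..n. D i x\<bar> powr q)"
    and "(lp_norm M q (\<lambda>x. \<Sum>i=1..n. D i x))\<^sup>2 \<le> 2 * q * (q - 1) * (\<Sum>i=1..n. (lp_norm M q (D i))\<^sup>2)"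
proof -
  have S_measurable: "(\<lambda>x. \<Sum>i=1..m. D i x) \<in> borel_measurable (F m)" if "m \<le> n" for m
    using that by (intro borel_measurable_sum measurable_F_mono[OF adapted]) auto
  have "integrable M (\<lambda>x. \<bar>\<Sum>i=1..m. D i x\<bar> powr q) \<and>
    (lp_norm M q (\<lambda>x. \<Sum>i=1..m. D i x))\<^sup>2 \<le> 2 * q * (q - 1) * (\<Sum>i=1..m. (lp_norm M q (D i))\<^sup>2)"
    if "m \<le> n" for m
    using that
  proof (induction m)
    case 0
    then show ?case by (simp add: lp_norm_def)
  next
    case (Suc m)
    interpret sigma_finite_subalgebra M "F m" by (rule sigma_finite_subalgebra_F)
    have m: "Suc m \<in> {1..n}" using Suc.prems by simp
    have S: "(\<lambda>x. \<Sum>i=1..m. D i x) \<in> borel_measurable (F m)"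
      using Suc.prems by (intro S_measurable) simp
    have D: "D (Suc m) \<in> borel_measurable M" using adapted[OF m] by (rule measurable_F_imp_M)
    have ce: "AE x in M. real_cond_exp M (F m) (D (Suc m)) x = 0" using centered[OF m] by simp
    have IH: "integrable M (\<lambda>x. \<bar>\<Sum>i=1..m. D i x\<bar> powr q)"
      "(lp_norm M q (\<lambda>x. \<Sum>i=1..m. D i x))\<^sup>2 \<le> 2 * q * (q - 1) * (\<Sum>i=1..m. (lp_norm M q (D i))\<^sup>2)"
      using Suc by auto
    have sum: "(\<lambda>x. \<Sum>i=1..Suc m. D i x) = (\<lambda>x. (\<Sum>i=1..m. D i x) + D (Suc m) x)"
      by (simp add: sum.cl_ivl_Suc)
    show ?case
      unfolding sum using lp_norm_add_centered_powr_le(1)[OF q S D ce IH(1) Lq[OF m]]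
        lp_norm_add_centered_le[OF q S D ce IH(1) Lq[OF m]] IH(2)
      by (simp add: sum.cl_ivl_Suc distrib_left)
  qed
  then show "integrable M (\<lambda>x. \<bar>\<Sum>i=1..n. D i x\<bar> powr q)"
    and "(lp_norm M q (\<lambda>x. \<Sum>i=1..n. D i x))\<^sup>2 \<le> 2 * q * (q - 1) * (\<Sum>i=1..n. (lp_norm M q (D i))\<^sup>2)"
    by auto
qed

end

section \<open>Index sets and the recursive structure of the chaos\<close>

lemma finite_idx_set: "finite (idx_set k n)"
proof (rule finite_subset)
  show "idx_set k n \<subseteq> {xs. set xs \<subseteq> {1..n} \<and> length xs = k}" unfolding idx_set_def by auto
qed (simp add: finite_lists_length_eq)

lemma idx_set_0: "idx_set 0 n = {[]}"
  unfolding idx_set_def by auto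

lemma idx_set_Suc:
  "idx_set (Suc k) n = (\<Union>i\<in>{1..n}. (\<lambda>J. J @ [i]) ` idx_set k (i - 1))"
proof (intro equalityI subsetI)
  fix I assume I: "I \<in> idx_set (Suc k) n"
  then have "length I = Suc k" by (simp add: idx_set_def)
  then obtain J i where Ji: "I = J @ [i]" by (auto simp: length_Suc_conv_rev)
  with I have "J \<in> idx_set k (i - 1) \<and> i \<in> {1..n}"
    unfolding idx_set_def by (auto simp: sorted_wrt_append; force)
  with Ji show "I \<in> (\<Union>i\<in>{1..n}. (\<lambda>J. J @ [i]) ` idx_set k (i - 1))" by blast
next
  fix I assume "I \<in> (\<Union>i\<in>{1..n}. (\<lambda>J. J @ [i]) ` idx_set k (i - 1))"
  then obtain i J where "i \<in> {1..n}" "J \<in> idx_set k (i - 1)" "I = J @ [i]" by blast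
  then show "I \<in> idx_set (Suc k) n" unfolding idx_set_def by (auto simp: sorted_wrt_append; force)
qed

lemma sum_idx_set_Suc:
  "(\<Sum>I\<in>idx_set (Suc k) n. g I) = (\<Sum>i=1..n. \<Sum>J\<in>idx_set k (i - 1). g (J @ [i]))"
proof -
  have "(\<Sum>I\<in>idx_set (Suc k) n. g I) = (\<Sum>i=1..n. \<Sum>I\<in>(\<lambda>J. J @ [i]) ` idx_set k (i - 1). g I)"
    unfolding idx_set_Suc by (rule sum.UNION_disjoint) (auto simp: finite_idx_set)
  then show ?thesis by (simp add: sum.reindex inj_on_def)
qed

lemma card_idx_set: "card (idx_set d n) = n choose d"
proof -
  have "inj_on set (idx_set d n)"
    unfolding idx_set_def by (intro inj_onI) (auto intro: strict_sorted_equal)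
  moreover have "set ` idx_set d n = {S. S \<subseteq> {1..n} \<and> card S = d}"
  proof (intro equalityI subsetI)
    fix S assume "S \<in> {S. S \<subseteq> {1..n} \<and> card S = d}"
    then have "S = set (sorted_list_of_set S)" "sorted_list_of_set S \<in> idx_set d n"
      unfolding idx_set_def using finite_subset[of S "{1..n}"] by auto
    then show "S \<in> set ` idx_set d n" by blast
  qed (auto simp: idx_set_def distinct_card strict_sorted_iff)
  ultimately show ?thesis
    using card_image n_subsets[of "{1..n}" d] by fastforce
qed

lemma Qd_0: "Qd \<xi> 0 n b x = b []"
  unfolding Qd_def xi_prod_def by (simp add: idx_set_0)

lemma xi_prod_snoc:
  assumes "length J = k"
  shows "xi_prod \<xi> (Suc k) (J @ [i]) x = xi_prod \<xi> k J x * \<xi> i (Suc k) x"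
proof -
  have "(\<Prod>m=1..k. \<xi> ((J @ [i]) ! (m - 1)) m x) = (\<Prod>m=1..k. \<xi> (J ! (m - 1)) m x)"
    using assms by (intro prod.cong) (auto simp: nth_append)
  then show ?thesis unfolding xi_prod_def using assms by (simp add: prod.cl_ivl_Suc nth_append)
qed

lemma Qd_Suc:
  "Qd \<xi> (Suc k) n b x = (\<Sum>i=1..n. \<xi> i (Suc k) x * Qd \<xi> k (i - 1) (\<lambda>J. b (J @ [i])) x)"
  unfolding Qd_def sum_idx_set_Suc sum_distrib_left
  by (intro sum.cong refl) (auto simp: xi_prod_snoc idx_set_def mult.commute mult.left_commute)

section \<open>The upper bound\<close>

lemma gamma_c_nonneg: "0 \<le> gamma_c k"
  by (induction k rule: gamma_c.induct) auto

lemma gamma_c_Suc: "0 < d \<Longrightarrow> gamma_c (Suc d) = sqrt 2 * (1 + 1 / real d) ^ d * gamma_c d"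
  by (cases d) auto

context filtered_prob_space
begin

lemma Qd_measurable:
  assumes "\<And>i m. i \<in> {1..n} \<Longrightarrow> m \<in> {1..k} \<Longrightarrow> \<xi> i m \<in> borel_measurable (F i)"
  shows "Qd \<xi> k n b \<in> borel_measurable (F n)"
proof -
  have factor: "\<xi> (I ! (m - 1)) m \<in> borel_measurable (F n)" if I: "I \<in> idx_set k n" and m: "m \<in> {1..k}" for I m
  proof -
    have "I ! (m - 1) \<in> set I" using I m unfolding idx_set_def by auto
    then have "I ! (m - 1) \<in> {1..n}" using I unfolding idx_set_def by auto
    with assms m have "\<xi> (I ! (m - 1)) m \<in> borel_measurable (F (I ! (m - 1)))" by simp
    then show ?thesis by (rule measurable_F_mono) (use \<open>I ! (m - 1) \<in> {1..n}\<close> in simp)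
  qed
  show ?thesis unfolding Qd_def[abs_def] xi_prod_def
    by (intro borel_measurable_sum borel_measurable_times borel_measurable_prod borel_measurable_const factor)
      auto
qed

lemma lp_norm_martingale_transform_le:
  fixes \<xi> Y :: "nat \<Rightarrow> 'a \<Rightarrow> real"
  assumes q: "2 \<le> q"
    and adapted: "\<And>i. i \<in> {1..n} \<Longrightarrow> \<xi> i \<in> borel_measurable (F i)"
    and centered: "\<And>i. i \<in> {1..n} \<Longrightarrow> AE x in M. real_cond_exp M (F (i - 1)) (\<xi> i) x = 0"
    and predictable: "\<And>i. i \<in> {1..n} \<Longrightarrow> Y i \<in> borel_measurable (F (i - 1))"
    and Lq: "\<And>i. i \<in> {1..n} \<Longrightarrow> integrable M (\<lambda>x. \<bar>\<xi> i x * Y i x\<bar> powr q)"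
  shows "integrable M (\<lambda>x. \<bar>\<Sum>i=1..n. \<xi> i x * Y i x\<bar> powr q)"
    and "lp_norm M q (\<lambda>x. \<Sum>i=1..n. \<xi> i x * Y i x)
      \<le> sqrt 2 * q * sqrt (\<Sum>i=1..n. (lp_norm M q (\<lambda>x. \<xi> i x * Y i x))\<^sup>2)"
proof -
  have term_adapted: "(\<lambda>x. \<xi> i x * Y i x) \<in> borel_measurable (F i)" if "i \<in> {1..n}" for i
  proof (rule borel_measurable_times)
    show "\<xi> i \<in> borel_measurable (F i)" using adapted that by simp
    show "Y i \<in> borel_measurable (F i)" using predictable[OF that] by (rule measurable_F_mono) simp
  qed
  have term_centered: "AE x in M. real_cond_exp M (F (i - 1)) (\<lambda>x. \<xi> i x * Y i x) x = 0"
    if i: "i \<in> {1..n}" for i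
  proof -
    interpret sigma_finite_subalgebra M "F (i - 1)" by (rule sigma_finite_subalgebra_F)
    have int: "integrable M (\<lambda>x. \<xi> i x * Y i x)"
      by (rule integrable_of_integrable_abs_powr[of q])
        (use q Lq[OF i] term_adapted[OF i, THEN measurable_F_imp_M] in auto)
    have "\<xi> i \<in> borel_measurable M"
      using adapted[OF i] by (rule measurable_F_imp_M)
    from real_cond_exp_mult_eq_zero[OF predictable[OF i] this int centered[OF i]] show ?thesis .
  qed
  note martingale = lp_norm_martingale_le[OF q term_adapted term_centered Lq]
  show "integrable M (\<lambda>x. \<bar>\<Sum>i=1..n. \<xi> i x * Y i x\<bar> powr q)"
    using martingale(1) by blast
  define S where "S = (\<Sum>i=1..n. (lp_norm M q (\<lambda>x. \<xi> i x * Y i x))\<^sup>2)"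
  have "(lp_norm M q (\<lambda>x. \<Sum>i=1..n. \<xi> i x * Y i x))\<^sup>2 \<le> 2 * q * (q - 1) * S"
    using martingale(2) unfolding S_def by blast
  also have "\<dots> \<le> 2 * q\<^sup>2 * S"
    using q by (intro mult_right_mono) (auto simp: S_def sum_nonneg power2_eq_square)
  also have "\<dots> = (sqrt 2 * q * sqrt S)\<^sup>2"
    by (simp add: S_def power_mult_distrib sum_nonneg)
  finally show "lp_norm M q (\<lambda>x. \<Sum>i=1..n. \<xi> i x * Y i x) \<le> sqrt 2 * q * sqrt S"
    by (rule power2_le_imp_le) (use q in \<open>simp add: S_def sum_nonneg\<close>)
qed

lemma lp_norm_chaos_Suc_le:
  fixes \<xi> :: "nat \<Rightarrow> nat \<Rightarrow> 'a \<Rightarrow> real" and b :: "nat list \<Rightarrow> real" and k n :: nat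
  defines "Y \<equiv> \<lambda>i. Qd \<xi> k (i - 1) (\<lambda>J. b (J @ [i]))"
  assumes q: "2 \<le> q" and a: "0 \<le> a"
    and adapted: "\<And>i m. i \<in> {1..n} \<Longrightarrow> m \<in> {1..Suc k} \<Longrightarrow> \<xi> i m \<in> borel_measurable (F i)"
    and centered: "\<And>i. i \<in> {1..n} \<Longrightarrow> AE x in M. real_cond_exp M (F (i - 1)) (\<xi> i (Suc k)) x = 0"
    and summand_Lq: "\<And>i. i \<in> {1..n} \<Longrightarrow> integrable M (\<lambda>x. \<bar>\<xi> i (Suc k) x * Y i x\<bar> powr q)"
    and summand_le: "\<And>i. i \<in> {1..n} \<Longrightarrow>
      lp_norm M q (\<lambda>x. \<xi> i (Suc k) x * Y i x) \<le> a * sqrt (\<Sum>J\<in>idx_set k (i - 1). (b (J @ [i]))\<^sup>2)"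
  shows "integrable M (\<lambda>x. \<bar>Qd \<xi> (Suc k) n b x\<bar> powr q)"
    and "lp_norm M q (Qd \<xi> (Suc k) n b) \<le> sqrt 2 * q * a * sqrt (\<Sum>I\<in>idx_set (Suc k) n. (b I)\<^sup>2)"
proof -
  have Q: "Qd \<xi> (Suc k) n b = (\<lambda>x. \<Sum>i=1..n. \<xi> i (Suc k) x * Y i x)"
    unfolding Y_def by (rule ext) (rule Qd_Suc)
  have \<xi>: "\<xi> i (Suc k) \<in> borel_measurable (F i)" if "i \<in> {1..n}" for i
    using adapted that by simp
  have Y: "Y i \<in> borel_measurable (F (i - 1))" if "i \<in> {1..n}" for i
    unfolding Y_def by (rule Qd_measurable, rule adapted) (use that in auto)
  note transform = lp_norm_martingale_transform_le[where n = n, OF q \<xi> centered Y summand_Lq]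
  show "integrable M (\<lambda>x. \<bar>Qd \<xi> (Suc k) n b x\<bar> powr q)"
    unfolding Q using transform(1) by blast
  have "(\<Sum>i=1..n. (lp_norm M q (\<lambda>x. \<xi> i (Suc k) x * Y i x))\<^sup>2)
      \<le> (\<Sum>i=1..n. (a * sqrt (\<Sum>J\<in>idx_set k (i - 1). (b (J @ [i]))\<^sup>2))\<^sup>2)"
    using summand_le by (intro sum_mono power_mono) auto
  also have "\<dots> = (a * sqrt (\<Sum>I\<in>idx_set (Suc k) n. (b I)\<^sup>2))\<^sup>2"
    by (simp add: power_mult_distrib sum_nonneg sum_idx_set_Suc sum_distrib_left)
  finally have sum_le: "sqrt (\<Sum>i=1..n. (lp_norm M q (\<lambda>x. \<xi> i (Suc k) x * Y i x))\<^sup>2)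
      \<le> a * sqrt (\<Sum>I\<in>idx_set (Suc k) n. (b I)\<^sup>2)"
    by (rule real_le_lsqrt[rotated]) (use a in \<open>simp add: sum_nonneg\<close>)
  have "lp_norm M q (Qd \<xi> (Suc k) n b)
      \<le> sqrt 2 * q * sqrt (\<Sum>i=1..n. (lp_norm M q (\<lambda>x. \<xi> i (Suc k) x * Y i x))\<^sup>2)"
    unfolding Q using transform(2) by blast
  also have "\<dots> \<le> sqrt 2 * q * (a * sqrt (\<Sum>I\<in>idx_set (Suc k) n. (b I)\<^sup>2))"
    using sum_le q by (intro mult_left_mono) auto
  finally show "lp_norm M q (Qd \<xi> (Suc k) n b) \<le> sqrt 2 * q * a * sqrt (\<Sum>I\<in>idx_set (Suc k) n. (b I)\<^sup>2)"
    by (simp add: mult.assoc)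
qed

lemma lp_norm_chaos_one_le:
  fixes \<xi> :: "nat \<Rightarrow> nat \<Rightarrow> 'a \<Rightarrow> real"
  assumes q: "2 \<le> q" and c: "0 \<le> c"
    and adapted: "\<And>i. i \<in> {1..n} \<Longrightarrow> \<xi> i 1 \<in> borel_measurable (F i)"
    and centered: "\<And>i. i \<in> {1..n} \<Longrightarrow> AE x in M. real_cond_exp M (F (i - 1)) (\<xi> i 1) x = 0"
    and moments: "\<And>i. i \<in> {1..n} \<Longrightarrow> integrable M (\<lambda>x. \<bar>\<xi> i 1 x\<bar> powr q)"
    and bounded: "\<And>i. i \<in> {1..n} \<Longrightarrow> lp_norm M q (\<xi> i 1) \<le> c"
  shows "integrable M (\<lambda>x. \<bar>Qd \<xi> 1 n b x\<bar> powr q)"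
    and "lp_norm M q (Qd \<xi> 1 n b) \<le> sqrt 2 * q * c * sqrt (\<Sum>I\<in>idx_set 1 n. (b I)\<^sup>2)"
proof -
  have summand: "integrable M (\<lambda>x. \<bar>\<xi> i 1 x * Qd \<xi> 0 (i - 1) (\<lambda>J. b (J @ [i])) x\<bar> powr q) \<and>
    lp_norm M q (\<lambda>x. \<xi> i 1 x * Qd \<xi> 0 (i - 1) (\<lambda>J. b (J @ [i])) x)
      \<le> c * sqrt (\<Sum>J\<in>idx_set 0 (i - 1). (b (J @ [i]))\<^sup>2)" if i: "i \<in> {1..n}" for i
  proof -
    have "lp_norm M q (\<lambda>x. \<xi> i 1 x * b [i]) = \<bar>b [i]\<bar> * lp_norm M q (\<xi> i 1)"
      using q by (simp add: lp_norm_mult_const)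
    also have "\<dots> \<le> \<bar>b [i]\<bar> * c"
      using bounded[OF i] by (simp add: mult_left_mono)
    moreover have "integrable M (\<lambda>x. \<bar>\<xi> i 1 x * b [i]\<bar> powr q)"
      using moments[OF i] by (simp add: abs_mult powr_mult)
    ultimately show ?thesis by (simp add: Qd_0 idx_set_0 mult.commute)
  qed
  have "\<xi> i m \<in> borel_measurable (F i)" if "i \<in> {1..n}" "m \<in> {1..Suc 0}" for i m
    using that adapted by auto
  from lp_norm_chaos_Suc_le[where k = 0, OF q c this] summand centered
  show "integrable M (\<lambda>x. \<bar>Qd \<xi> 1 n b x\<bar> powr q)"
    and "lp_norm M q (Qd \<xi> 1 n b) \<le> sqrt 2 * q * c * sqrt (\<Sum>I\<in>idx_set 1 n. (b I)\<^sup>2)"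
    by auto
qed

lemma lp_norm_chaos_le:
  fixes \<xi> :: "nat \<Rightarrow> nat \<Rightarrow> 'a \<Rightarrow> real" and c :: "nat \<Rightarrow> real" and q :: real and d n :: nat
  assumes "0 < d" and "2 \<le> q"
    and "\<And>i m. i \<in> {1..n} \<Longrightarrow> m \<in> {1..d} \<Longrightarrow> \<xi> i m \<in> borel_measurable (F i)"
    and "\<And>i m. i \<in> {1..n} \<Longrightarrow> m \<in> {1..d} \<Longrightarrow> AE x in M. real_cond_exp M (F (i - 1)) (\<xi> i m) x = 0"
    and "\<And>i m. i \<in> {1..n} \<Longrightarrow> m \<in> {1..d} \<Longrightarrow> integrable M (\<lambda>x. \<bar>\<xi> i m x\<bar> powr (real d * q))"
    and "\<And>i m. i \<in> {1..n} \<Longrightarrow> m \<in> {1..d} \<Longrightarrow> lp_norm M (real d * q) (\<xi> i m) \<le> c m"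
    and "\<And>m. m \<in> {1..d} \<Longrightarrow> 0 \<le> c m"
  shows "integrable M (\<lambda>x. \<bar>Qd \<xi> d n b x\<bar> powr q) \<and>
    lp_norm M q (Qd \<xi> d n b) \<le> gamma_c d * q ^ d * sqrt (\<Sum>I\<in>idx_set d n. (b I)\<^sup>2) * (\<Prod>m=1..d. c m)"
  using assms
proof (induction d arbitrary: q n b rule: nat_induct_non_zero)
  case 1
  then have "integrable M (\<lambda>x. \<bar>Qd \<xi> 1 n b x\<bar> powr q) \<and>
    lp_norm M q (Qd \<xi> 1 n b) \<le> sqrt 2 * q * c 1 * sqrt (\<Sum>I\<in>idx_set 1 n. (b I)\<^sup>2)"
    by (intro conjI lp_norm_chaos_one_le) auto
  then show ?case by (simp add: mult_ac)
next
  case (Suc d)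
  note q = Suc.prems(1) and adapted = Suc.prems(2) and centered = Suc.prems(3)
    and moments = Suc.prems(4) and bounded = Suc.prems(5) and c_nonneg = Suc.prems(6)
  \<comment> \<open>Hoelder with exponents \<open>d + 1\<close> and \<open>(d + 1) / d\<close>: the chaos of order \<open>d\<close> is needed in
    \<open>L\<^sup>q\<^sup>'\<close>, and at exponent \<open>q'\<close> the hypotheses ask for moments of order \<open>d q' = (d + 1) q\<close>.\<close>
  define q' where "q' = (1 + 1 / real d) * q"
  define Y where "Y i = Qd \<xi> d (i - 1) (\<lambda>J. b (J @ [i]))" for i
  define a where "a = c (Suc d) * (gamma_c d * q' ^ d * (\<Prod>m=1..d. c m))"
  have "q \<le> q'" unfolding q'_def using q by (simp add: distrib_right)
  with q have q'_ge: "2 \<le> q'" by linarith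
  have q'_eq: "real d * q' = real (Suc d) * q"
    using Suc.hyps by (simp add: q'_def field_simps)
  have summand: "integrable M (\<lambda>x. \<bar>\<xi> i (Suc d) x * Y i x\<bar> powr q) \<and>
    lp_norm M q (\<lambda>x. \<xi> i (Suc d) x * Y i x) \<le> a * sqrt (\<Sum>J\<in>idx_set d (i - 1). (b (J @ [i]))\<^sup>2)"
    if i: "i \<in> {1..n}" for i
  proof -
    have IH: "integrable M (\<lambda>x. \<bar>Y i x\<bar> powr q') \<and>
      lp_norm M q' (Y i) \<le> gamma_c d * q' ^ d * sqrt (\<Sum>J\<in>idx_set d (i - 1). (b (J @ [i]))\<^sup>2)
        * (\<Prod>m=1..d. c m)"
      unfolding Y_def using i adapted centered moments bounded c_nonneg
      by (intro Suc.IH q'_ge) (auto simp: q'_eq)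
    have \<xi>: "\<xi> i (Suc d) \<in> borel_measurable M"
      using adapted[OF i] by (auto intro: measurable_F_imp_M)
    have Y: "Y i \<in> borel_measurable M"
      unfolding Y_def using i adapted by (intro measurable_F_imp_M[OF Qd_measurable]) auto
    have \<xi>_moment: "integrable M (\<lambda>x. \<bar>\<xi> i (Suc d) x\<bar> powr (real (Suc d) * q))"
      and \<xi>_bound: "lp_norm M (real (Suc d) * q) (\<xi> i (Suc d)) \<le> c (Suc d)"
      using moments[OF i, of "Suc d"] bounded[OF i, of "Suc d"] by simp_all
    have "0 < q" using q by simp
    have "integrable M (\<lambda>x. \<bar>\<xi> i (Suc d) x * Y i x\<bar> powr q) \<and> lp_norm M q (\<lambda>x. \<xi> i (Suc d) x * Y i x)
        \<le> c (Suc d) * (gamma_c d * q' ^ d * sqrt (\<Sum>J\<in>idx_set d (i - 1). (b (J @ [i]))\<^sup>2) * (\<Prod>m=1..d. c m))"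
      by (rule lp_norm_mult_le_Holder_Suc[OF Suc.hyps \<open>0 < q\<close> \<xi> \<xi>_moment \<xi>_bound Y, folded q'_def])
        (use IH in auto)
    then show ?thesis unfolding a_def by (simp add: mult_ac)
  qed
  have a: "0 \<le> a"
    unfolding a_def using c_nonneg q'_ge
    by (auto intro!: mult_nonneg_nonneg prod_nonneg gamma_c_nonneg)
  have gamma_c_Suc_factor: "gamma_c (Suc d) * q ^ Suc d * sqrt (\<Sum>I\<in>idx_set (Suc d) n. (b I)\<^sup>2) * (\<Prod>m=1..Suc d. c m)
      = sqrt 2 * q * a * sqrt (\<Sum>I\<in>idx_set (Suc d) n. (b I)\<^sup>2)"
    unfolding a_def q'_def using Suc.hyps by (simp add: gamma_c_Suc prod.cl_ivl_Suc power_mult_distrib mult_ac)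
  have "integrable M (\<lambda>x. \<bar>Qd \<xi> (Suc d) n b x\<bar> powr q)"
    and "lp_norm M q (Qd \<xi> (Suc d) n b) \<le> sqrt 2 * q * a * sqrt (\<Sum>I\<in>idx_set (Suc d) n. (b I)\<^sup>2)"
    using lp_norm_chaos_Suc_le[of q a n d \<xi> b] q a summand adapted centered unfolding Y_def by auto
  then show ?case unfolding gamma_c_Suc_factor by blast
qed

end

lemma mart_diff_filtered_prob_space: "mart_diff M F \<xi> d n \<Longrightarrow> filtered_prob_space M F"
  unfolding mart_diff_def filtered_prob_space_def filtered_prob_space_axioms_def by auto

lemma lp_norm_le_mu:
  assumes "i \<in> {1..n}"
  shows "lp_norm M r (\<xi> i m) \<le> mu M \<xi> n m r"
  unfolding mu_def using assms by (intro cSUP_upper) auto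

lemma admissible_ratio_le:
  fixes \<xi> :: "nat \<Rightarrow> nat \<Rightarrow> 'a \<Rightarrow> real"
  assumes adm: "admissible M F \<xi> d n b p" and d: "0 < d" and p: "2 \<le> p"
  shows "lp_norm M p (Qd \<xi> d n b) / (\<Prod>m=1..d. mu M \<xi> n m (real d * p)) \<le> gamma_c d * p ^ d"
proof -
  from adm have b: "(\<Sum>I\<in>idx_set d n. (b I)\<^sup>2) = 1" and md: "mart_diff M F \<xi> d n"
    and moments: "\<And>i m. i \<in> {1..n} \<Longrightarrow> m \<in> {1..d} \<Longrightarrow> integrable M (\<lambda>x. \<bar>\<xi> i m x\<bar> powr (real d * p))"
    and mu_pos: "\<And>m. m \<in> {1..d} \<Longrightarrow> 0 < mu M \<xi> n m (real d * p)"
    unfolding admissible_def coef_set_def by auto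
  from md have adapted: "\<And>i m. i \<in> {1..n} \<Longrightarrow> m \<in> {1..d} \<Longrightarrow> \<xi> i m \<in> borel_measurable (F i)"
    and centered: "\<And>i m. i \<in> {1..n} \<Longrightarrow> m \<in> {1..d} \<Longrightarrow> AE x in M. real_cond_exp M (F (i - 1)) (\<xi> i m) x = 0"
    unfolding mart_diff_def by auto
  interpret filtered_prob_space M F using md by (rule mart_diff_filtered_prob_space)
  have "integrable M (\<lambda>x. \<bar>Qd \<xi> d n b x\<bar> powr p) \<and>
    lp_norm M p (Qd \<xi> d n b) \<le> gamma_c d * p ^ d * sqrt (\<Sum>I\<in>idx_set d n. (b I)\<^sup>2)
      * (\<Prod>m=1..d. mu M \<xi> n m (real d * p))"
    by (rule lp_norm_chaos_le)
      (use d p adapted centered moments mu_pos in \<open>auto simp: less_imp_le intro: lp_norm_le_mu\<close>)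
  then have "lp_norm M p (Qd \<xi> d n b) \<le> gamma_c d * p ^ d * (\<Prod>m=1..d. mu M \<xi> n m (real d * p))"
    using b by simp
  moreover have "0 < (\<Prod>m=1..d. mu M \<xi> n m (real d * p))" using mu_pos by (intro prod_pos) auto
  ultimately show ?thesis by (simp add: divide_le_eq)
qed

lemma KM_le:
  assumes "0 < d" "2 \<le> p"
  shows "KM TYPE('a) d p \<le> ereal (gamma_c d * p ^ d)"
  unfolding KM_def using admissible_ratio_le[OF _ assms] by (intro SUP_least) auto

section \<open>The lower bound: Rademacher chaos\<close>

definition sign_vectors :: "nat \<Rightarrow> (nat \<Rightarrow> real) set" where
  "sign_vectors n = PiE_dflt {1..n} 0 (\<lambda>_. {-1, 1})"

definition rademacher_space :: "nat \<Rightarrow> (nat \<Rightarrow> real) measure" where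
  "rademacher_space n = measure_pmf (pmf_of_set (sign_vectors n))"

definition coordinate_events :: "nat \<Rightarrow> (nat \<Rightarrow> real) set set" where
  "coordinate_events k = {A. \<forall>\<omega> \<omega>'. (\<forall>j\<in>{1..k}. \<omega> j = \<omega>' j) \<longrightarrow> (\<omega> \<in> A \<longleftrightarrow> \<omega>' \<in> A)}"

definition coordinate_filtration :: "nat \<Rightarrow> (nat \<Rightarrow> real) measure" where
  "coordinate_filtration k = sigma UNIV (coordinate_events k)"

definition all_ones :: "nat \<Rightarrow> nat \<Rightarrow> real" where
  "all_ones n j = (if j \<in> {1..n} then 1 else 0)"

lemma finite_sign_vectors: "finite (sign_vectors n)"
  unfolding sign_vectors_def by (rule finite_PiE_dflt) auto

lemma all_ones_in_sign_vectors: "all_ones n \<in> sign_vectors n"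
  unfolding sign_vectors_def PiE_dflt_def all_ones_def by auto

lemma card_sign_vectors: "card (sign_vectors n) = 2 ^ n"
  unfolding sign_vectors_def by (subst card_PiE_dflt) (auto simp: numeral_2_eq_2)

lemma sign_vector_coordinate: "\<omega> \<in> sign_vectors n \<Longrightarrow> i \<in> {1..n} \<Longrightarrow> \<bar>\<omega> i\<bar> = 1"
  unfolding sign_vectors_def PiE_dflt_def by auto

lemma sign_vectors_nonempty: "sign_vectors n \<noteq> {}"
  using all_ones_in_sign_vectors by blast

lemma set_pmf_sign_vectors: "set_pmf (pmf_of_set (sign_vectors n)) = sign_vectors n"
  by (simp add: sign_vectors_nonempty finite_sign_vectors)

lemma integral_rademacher_space:
  fixes f :: "(nat \<Rightarrow> real) \<Rightarrow> real"
  shows "(\<integral>\<omega>. f \<omega> \<partial>rademacher_space n) = (\<Sum>\<omega>\<in>sign_vectors n. f \<omega>) / 2 ^ n"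
proof -
  have "(\<integral>\<omega>. f \<omega> \<partial>rademacher_space n) = (\<Sum>\<omega>\<in>sign_vectors n. f \<omega> * pmf (pmf_of_set (sign_vectors n)) \<omega>)"
    unfolding rademacher_space_def
    by (rule integral_measure_pmf_real) (auto simp: finite_sign_vectors set_pmf_sign_vectors)
  also have "\<dots> = (\<Sum>\<omega>\<in>sign_vectors n. f \<omega> / 2 ^ n)"
    by (intro sum.cong) (auto simp: sign_vectors_nonempty finite_sign_vectors card_sign_vectors)
  finally show ?thesis by (simp add: sum_divide_distrib)
qed

lemma integrable_rademacher_space:
  fixes f :: "(nat \<Rightarrow> real) \<Rightarrow> real"
  shows "integrable (rademacher_space n) f"
  unfolding rademacher_space_def
  by (intro integrable_measure_pmf_finite) (simp add: set_pmf_sign_vectors finite_sign_vectors)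

lemma sigma_algebra_coordinate_events: "sigma_algebra UNIV (coordinate_events k)"
  unfolding sigma_algebra_iff2 coordinate_events_def by blast

lemma sets_coordinate_filtration: "sets (coordinate_filtration k) = coordinate_events k"
  unfolding coordinate_filtration_def
  by (simp add: sigma_algebra.sigma_sets_eq[OF sigma_algebra_coordinate_events])

lemma filtered_prob_space_rademacher: "filtered_prob_space (rademacher_space n) coordinate_filtration"
proof (intro filtered_prob_space.intro filtered_prob_space_axioms.intro)
  show "prob_space (rademacher_space n)"
    unfolding rademacher_space_def by (rule prob_space_measure_pmf)
  show "subalgebra (rademacher_space n) (coordinate_filtration i)" for i
    unfolding subalgebra_def rademacher_space_def coordinate_filtration_def by simp
  show "sets (coordinate_filtration i) \<subseteq> sets (coordinate_filtration j)" if ij: "i \<le> j" for i j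
    unfolding sets_coordinate_filtration
  proof
    fix A assume A: "A \<in> coordinate_events i"
    show "A \<in> coordinate_events j" unfolding coordinate_events_def
    proof (intro CollectI allI impI)
      fix \<omega> \<omega>' :: "nat \<Rightarrow> real" assume "\<forall>l\<in>{1..j}. \<omega> l = \<omega>' l"
      then have "\<forall>l\<in>{1..i}. \<omega> l = \<omega>' l" using ij by auto
      then show "\<omega> \<in> A \<longleftrightarrow> \<omega>' \<in> A" using A unfolding coordinate_events_def by blast
    qed
  qed
qed

text \<open>Flipping the sign of \<open>\<omega> i\<close> preserves both the uniform distribution and the events
  determined by \<open>\<omega> 1, \<dots>, \<omega> (i - 1)\<close>.\<close>
lemma sum_indicator_mult_sign_eq_zero:
  assumes A: "A \<in> coordinate_events (i - 1)" and i: "i \<in> {1..n}"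
  shows "(\<Sum>\<omega>\<in>sign_vectors n. indicator A \<omega> * \<omega> i) = (0::real)"
proof -
  define flip where "flip \<omega> = fun_upd \<omega> i (- \<omega> i)" for \<omega> :: "nat \<Rightarrow> real"
  have "flip \<omega> \<in> sign_vectors n" if "\<omega> \<in> sign_vectors n" for \<omega>
    using that i unfolding flip_def sign_vectors_def PiE_dflt_def by auto
  moreover have "flip (flip \<omega>) = \<omega>" for \<omega> unfolding flip_def by auto
  ultimately have "bij_betw flip (sign_vectors n) (sign_vectors n)"
    by (intro bij_betw_byWitness[where f' = flip]) auto
  moreover have "indicator A (flip \<omega>) = (indicator A \<omega> :: real)" for \<omega>
  proof -
    have "\<forall>j\<in>{1..i - 1}. flip \<omega> j = \<omega> j" unfolding flip_def by auto
    then have "flip \<omega> \<in> A \<longleftrightarrow> \<omega> \<in> A" using A unfolding coordinate_events_def by blast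
    then show ?thesis by (simp add: indicator_def)
  qed
  ultimately have "(\<Sum>\<omega>\<in>sign_vectors n. indicator A \<omega> * \<omega> i) = - (\<Sum>\<omega>\<in>sign_vectors n. indicator A \<omega> * \<omega> i)"
    by (subst sum.reindex_bij_betw[symmetric]) (auto simp: flip_def sum_negf)
  then show ?thesis by simp
qed

lemma real_cond_exp_rademacher:
  assumes i: "i \<in> {1..n}"
  shows "AE \<omega> in rademacher_space n. real_cond_exp (rademacher_space n) (coordinate_filtration (i - 1)) (\<lambda>\<omega>. \<omega> i) \<omega> = 0"
proof -
  interpret filtered_prob_space "rademacher_space n" coordinate_filtration
    by (rule filtered_prob_space_rademacher)
  interpret sigma_finite_subalgebra "rademacher_space n" "coordinate_filtration (i - 1)"
    by (rule sigma_finite_subalgebra_F)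
  have "AE \<omega> in rademacher_space n. real_cond_exp (rademacher_space n) (coordinate_filtration (i - 1)) (\<lambda>\<omega>. \<omega> i) \<omega> = (\<lambda>_. 0) \<omega>"
  proof (rule real_cond_exp_charact)
    fix A assume "A \<in> sets (coordinate_filtration (i - 1))"
    then show "(\<integral>\<omega>\<in>A. \<omega> i \<partial>rademacher_space n) = (\<integral>\<omega>\<in>A. 0 \<partial>rademacher_space n)"
      unfolding set_lebesgue_integral_def sets_coordinate_filtration
      using sum_indicator_mult_sign_eq_zero[OF _ i] by (simp add: integral_rademacher_space)
  qed (auto simp: integrable_rademacher_space)
  then show ?thesis by simp
qed

lemma mu_rademacher:
  assumes "1 \<le> n" "r > 0"
  shows "mu (rademacher_space n) (\<lambda>i m \<omega>. \<omega> i) n m r = 1"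
proof -
  have "lp_norm (rademacher_space n) r (\<lambda>\<omega>. \<omega> i) = 1" if "i \<in> {1..n}" for i
    using that by (simp add: lp_norm_def integral_rademacher_space sign_vector_coordinate card_sign_vectors)
  then have "mu (rademacher_space n) (\<lambda>i m \<omega>. \<omega> i) n m r = (SUP i\<in>{1..n}. 1)"
    unfolding mu_def by (intro SUP_cong) auto
  also have "\<dots> = 1" using assms by (intro cSUP_const) auto
  finally show ?thesis .
qed

lemma mart_diff_rademacher: "mart_diff (rademacher_space n) coordinate_filtration (\<lambda>i m \<omega>. \<omega> i) d n"
  unfolding mart_diff_def
proof (intro conjI allI impI ballI)
  interpret filtered_prob_space "rademacher_space n" coordinate_filtration
    by (rule filtered_prob_space_rademacher)
  show "prob_space (rademacher_space n)" by (rule prob_space_axioms)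
  show "subalgebra (rademacher_space n) (coordinate_filtration i)" for i by (rule subalgebra_F)
  show "sets (coordinate_filtration i) \<subseteq> sets (coordinate_filtration j)" if "i \<le> j" for i j
    using that by (rule sets_F_mono)
  show "sets (coordinate_filtration 0) = {{}, space (rademacher_space n)}"
    unfolding sets_coordinate_filtration coordinate_events_def rademacher_space_def by auto
  fix i m assume i: "i \<in> {1..n}"
  show "(\<lambda>\<omega>. \<omega> i) \<in> borel_measurable (coordinate_filtration i)"
    using i by (intro measurableI) (auto simp: sets_coordinate_filtration coordinate_events_def coordinate_filtration_def)
  show "integrable (rademacher_space n) (\<lambda>\<omega>. \<omega> i)" by (rule integrable_rademacher_space)
  show "AE \<omega> in rademacher_space n. real_cond_exp (rademacher_space n) (coordinate_filtration (i - 1)) (\<lambda>\<omega>. \<omega> i) \<omega> = 0"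
    using i by (rule real_cond_exp_rademacher)
qed

lemma lp_norm_rademacher_ge:
  assumes "0 < p" "\<omega> \<in> sign_vectors n"
  shows "\<bar>f \<omega>\<bar> / 2 powr (real n / p) \<le> lp_norm (rademacher_space n) p f"
proof -
  have "\<bar>f \<omega>\<bar> powr p / 2 ^ n \<le> (\<Sum>\<omega>\<in>sign_vectors n. \<bar>f \<omega>\<bar> powr p) / 2 ^ n"
    using assms(2) finite_sign_vectors by (intro divide_right_mono member_le_sum) auto
  then have "(\<bar>f \<omega>\<bar> powr p / 2 ^ n) powr (1 / p) \<le> lp_norm (rademacher_space n) p f"
    unfolding lp_norm_def integral_rademacher_space using assms(1) by (intro powr_mono2) auto
  moreover have "(\<bar>f \<omega>\<bar> powr p / 2 ^ n) powr (1 / p) = \<bar>f \<omega>\<bar> / 2 powr (real n / p)"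
    using assms(1) by (simp add: powr_divide powr_powr flip: powr_realpow)
  ultimately show ?thesis by simp
qed

lemma Qd_rademacher_all_ones: "Qd (\<lambda>i m \<omega>. \<omega> i) d n b (all_ones n) = (\<Sum>I\<in>idx_set d n. b I)"
proof -
  have "xi_prod (\<lambda>i m \<omega>. \<omega> i) d I (all_ones n) = 1" if I: "I \<in> idx_set d n" for I
  proof -
    have "I ! (m - 1) \<in> {1..n}" if "m \<in> {1..d}" for m
    proof -
      have "I ! (m - 1) \<in> set I" using I that unfolding idx_set_def by auto
      then show ?thesis using I unfolding idx_set_def by auto
    qed
    then show ?thesis unfolding xi_prod_def all_ones_def by simp
  qed
  then show ?thesis unfolding Qd_def by simp
qed

lemma admissible_rademacher:
  assumes "1 \<le> n" "0 < p" "b \<in> coef_set d n"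
  shows "admissible (rademacher_space n) coordinate_filtration (\<lambda>i m \<omega>. \<omega> i) d n b p"
  unfolding admissible_def
proof (intro conjI ballI)
  show "0 < mu (rademacher_space n) (\<lambda>i m \<omega>. \<omega> i) n m (real d * p)" if "m \<in> {1..d}" for m
    using that assms by (subst mu_rademacher) auto
qed (use assms in \<open>simp_all add: mart_diff_rademacher integrable_rademacher_space\<close>)

lemma flat_coef_set: "d \<le> n \<Longrightarrow> (\<lambda>I. 1 / sqrt (n choose d)) \<in> coef_set d n"
  unfolding coef_set_def by (simp add: card_idx_set power_divide)

lemma lp_norm_flat_rademacher_chaos_ge:
  assumes "0 < p" "d \<le> n"
  shows "sqrt (n choose d) / 2 powr (real n / p)
    \<le> lp_norm (rademacher_space n) p (Qd (\<lambda>i m \<omega>. \<omega> i) d n (\<lambda>I. 1 / sqrt (n choose d)))"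
proof -
  have "Qd (\<lambda>i m \<omega>. \<omega> i) d n (\<lambda>I. 1 / sqrt (n choose d)) (all_ones n) = sqrt (n choose d)"
    using assms(2) by (simp add: Qd_rademacher_all_ones card_idx_set real_div_sqrt)
  then show ?thesis
    using lp_norm_rademacher_ge[OF assms(1) all_ones_in_sign_vectors,
        where f = "Qd (\<lambda>i m \<omega>. \<omega> i) d n (\<lambda>I. 1 / sqrt (n choose d))" and n = n] by simp
qed

lemma quarter_power_le_binomial:
  fixes p :: real and d :: nat
  defines "n \<equiv> d * nat \<lfloor>p\<rfloor>"
  assumes d: "0 < d" and p: "2 \<le> p"
  shows "(1 / 4) ^ d * p powr (real d / 2) \<le> sqrt (n choose d) / 2 powr (real n / p)"
proof -
  define N where "N = nat \<lfloor>p\<rfloor>"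
  have N: "p / 2 \<le> real N" "real N \<le> p" "1 \<le> N"
    using p unfolding N_def by linarith+
  have "2 powr (real d / 2) * 2 powr (real n / p) \<le> 2 powr real d * 2 powr real d"
  proof (intro mult_mono powr_mono)
    have "real n / p = real d * (real N / p)" unfolding n_def N_def by simp
    also have "\<dots> \<le> real d * 1" using N p by (intro mult_left_mono) auto
    finally show "real n / p \<le> real d" by simp
  qed auto
  also have "\<dots> = 4 ^ d" by (simp add: powr_realpow flip: power_mult_distrib)
  finally have "(1 / 4) ^ d * p powr (real d / 2) \<le> p powr (real d / 2) / (2 powr (real d / 2) * 2 powr (real n / p))"
    by (simp add: power_one_over divide_left_mono)
  also have "\<dots> = (p / 2) powr (real d / 2) / 2 powr (real n / p)"
    by (simp add: powr_divide)
  also have "\<dots> \<le> sqrt (n choose d) / 2 powr (real n / p)"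
  proof (intro divide_right_mono)
    have "(p / 2) powr (real d / 2) \<le> real N powr (real d / 2)"
      using N p by (intro powr_mono2) auto
    also have "\<dots> = (real N powr real d) powr (1 / 2)"
      by (simp add: powr_powr)
    also have "\<dots> = sqrt (real N ^ d)"
      using N by (simp add: powr_half_sqrt powr_realpow)
    also have "\<dots> \<le> sqrt (n choose d)"
      using binomial_ge_n_over_k_pow_k[of d n] d N(3) unfolding n_def N_def by simp
    finally show "(p / 2) powr (real d / 2) \<le> sqrt (n choose d)" .
  qed simp
  finally show ?thesis .
qed

lemma KM_ge:
  assumes d: "0 < d" and p: "2 \<le> p"
  shows "ereal ((1 / 4) ^ d * p powr (real d / 2)) \<le> KM TYPE(nat \<Rightarrow> real) d p"
proof -
  define n where "n = d * nat \<lfloor>p\<rfloor>"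
  define b :: "nat list \<Rightarrow> real" where "b = (\<lambda>I. 1 / sqrt (n choose d))"
  have "1 \<le> nat \<lfloor>p\<rfloor>" using p by linarith
  then have n: "d \<le> n" "1 \<le> n"
    using d unfolding n_def by (metis mult_le_mono2 nat_mult_1_right, simp)
  have "(1 / 4) ^ d * p powr (real d / 2) \<le> lp_norm (rademacher_space n) p (Qd (\<lambda>i m \<omega>. \<omega> i) d n b)"
    using quarter_power_le_binomial[OF d p] lp_norm_flat_rademacher_chaos_ge[of p d n] n p
    unfolding n_def b_def by fastforce
  also have "\<dots> = lp_norm (rademacher_space n) p (Qd (\<lambda>i m \<omega>. \<omega> i) d n b)
      / (\<Prod>m=1..d. mu (rademacher_space n) (\<lambda>i m \<omega>. \<omega> i) n m (real d * p))"
    using mu_rademacher n d p by simp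
  also have "ereal \<dots> \<le> KM TYPE(nat \<Rightarrow> real) d p"
    unfolding KM_def b_def using admissible_rademacher[OF n(2) _ flat_coef_set[OF n(1)]] p
    by (intro SUP_upper2[of "(rademacher_space n, coordinate_filtration, \<lambda>i m \<omega>. \<omega> i, n, b)"])
      (auto simp: b_def)
  finally show ?thesis by simp
qed

theorem corollary3:
  "\<exists>C::real. 0 < C \<and>
     (\<forall>d p. 2 \<le> d \<longrightarrow> 2 \<le> p \<longrightarrow>
        ereal (C ^ d * p powr (real d / 2)) \<le> KM TYPE(nat \<Rightarrow> real) d p \<and>
        KM TYPE('a) d p \<le> ereal (gamma_c d * p ^ d))"
proof (intro exI[of _ "1 / 4 :: real"] conjI allI impI)
  fix d :: nat and p :: real
  assume "2 \<le> d" "2 \<le> p"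
  then show "ereal ((1 / 4) ^ d * p powr (real d / 2)) \<le> KM TYPE(nat \<Rightarrow> real) d p"
    and "KM TYPE('a) d p \<le> ereal (gamma_c d * p ^ d)"
    by (auto intro: KM_ge KM_le)
qed simp

end
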